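(* Let $G$ be a finite abelian group with $|G|>1$ which is not a cyclic group of prime power order, and let $A$ be a non-empty subset of $G$. Then there exists a subgroup $H$ of $G$ of prime order such that $$|\{a+H\in G/H:\ A\cap(a+H)\neq\emptyset\}|\geq\sqrt{|A|}.$$
   Context: For a subgroup $H$ of $G$, $G/H$ is the set of cosets $a+H$; the quantity on the left is the number of cosets of $H$ that meet $A$. *)

theory Defs
  imports "HOL-Algebra.Algebra"
begin

definition cyclic_group :: "('a, 'b) monoid_scheme \<Rightarrow> bool" where
  "cyclic_group G \<longleftrightarrow> (\<exists>g \<in> carrier G. generate G {g} = carrier G)"

end

theory Submission
  imports Defs
begin

text \<open>Two distinct subgroups \<open>H1\<close>, \<open>H2\<close> of prime order meet trivially, so
  \<open>a \<mapsto> (H1 #> a, H2 #> a)\<close> is injective on \<open>A\<close>: the product of the two coset counts is at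
  least \<open>card A\<close>, and the larger of them is at least \<open>sqrt (card A)\<close>.
  Such a pair exists unless \<open>G\<close> has a unique subgroup \<open>P\<close> of prime order \<open>p\<close>. Then, by Cauchy's
  theorem, all element orders are powers of \<open>p\<close>, and an element \<open>g\<close> of maximal order generates
  \<open>G\<close>: by induction on the order of \<open>h\<close> we have \<open>h [^] p = g [^] s\<close>, necessarily with \<open>p dvd s\<close>,
  so \<open>h\<close> differs from a power of \<open>g\<close> by an element of exponent \<open>p\<close>, which lies in
  \<open>P \<subseteq> generate G {g}\<close>. Hence \<open>G\<close> would be cyclic of prime power order.\<close>

lemma prime_power_if_unique_prime_divisor:
  fixes n q :: nat
  assumes "n \<noteq> 0" and "\<And>r. Factorial_Ring.prime r \<Longrightarrow> r dvd n \<Longrightarrow> r = q"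
  shows "n = q ^ multiplicity q n"
proof -
  have "prime_factors n \<subseteq> {q}"
    using assms by (auto simp: prime_factors_dvd)
  hence "(\<Prod>p\<in>prime_factors n. p ^ multiplicity p n) = q ^ multiplicity q n"
    by (cases "prime_factors n = {}") (auto simp: subset_singleton_iff prime_factorization_empty_iff)
  thus ?thesis
    using prod_prime_factors[OF assms(1)] by simp
qed

lemma (in group) exists_ord_eq_prime_in_generate:
  assumes "finite (carrier G)" and x: "x \<in> carrier G"
    and q: "Factorial_Ring.prime q" "q dvd ord x"
  shows "\<exists>y \<in> generate G {x}. ord y = q"
proof -
  obtain k where k: "ord x = q * k" using q(2) by blast
  have "k \<noteq> 0" using k ord_ge_1[OF assms(1) x] by auto
  hence "ord (x [^] k) = q"
    using ord_pow[OF x _ \<open>k \<noteq> 0\<close>] k by simp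
  moreover have "x [^] k \<in> generate G {x}"
    using generate_pow_on_finite_carrier[OF assms(1) x] by blast
  ultimately show ?thesis by blast
qed

lemma (in group) generate_eq_subgroup_of_prime_card:
  assumes "finite (carrier G)" and H: "subgroup H G" "Factorial_Ring.prime (card H)"
    and x: "x \<in> H" "x \<noteq> \<one>"
  shows "generate G {x} = H"
proof -
  interpret H: group "G\<lparr>carrier := H\<rparr>" using subgroup_imp_group[OF H(1)] .
  have xG: "x \<in> carrier G" using H(1) x(1) subgroup.subset by blast
  let ?K = "generate G {x}"
  have KH: "?K \<subseteq> H" using generate_subgroup_incl[OF _ H(1)] x(1) by auto
  have "subgroup ?K (G\<lparr>carrier := H\<rparr>)"
    using subgroup_incl[OF generate_is_subgroup[of "{x}"] H(1) KH] xG by auto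
  hence "card (rcosets\<^bsub>G\<lparr>carrier := H\<rparr>\<^esub> ?K) * card ?K = card H"
    using H.lagrange by (simp add: order_def)
  hence "card ?K dvd card H"
    by (metis dvd_triv_right)
  moreover have "card ?K \<noteq> 1"
    using generate_pow_card[OF xG] ord_eq_1[OF xG] x(2) by simp
  ultimately have "card ?K = card H" using H(2) by (metis prime_nat_iff)
  moreover have "finite H" using assms(1) H(1) subgroup.subset finite_subset by blast
  ultimately show ?thesis using KH card_subset_eq by blast
qed

lemma (in group) prime_card_subgroups_inter_trivial:
  assumes "finite (carrier G)"
    and "subgroup H1 G" "Factorial_Ring.prime (card H1)"
    and "subgroup H2 G" "Factorial_Ring.prime (card H2)" and "H1 \<noteq> H2"
  shows "H1 \<inter> H2 \<subseteq> {\<one>}"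
  using generate_eq_subgroup_of_prime_card[OF assms(1)] assms by blast

lemma (in group) card_le_mult_card_rcosets_meeting:
  assumes "finite (carrier G)" and H1: "subgroup H1 G" and H2: "subgroup H2 G"
    and inter: "H1 \<inter> H2 \<subseteq> {\<one>}" and A: "A \<subseteq> carrier G"
  shows "card A \<le> card {C \<in> rcosets H1. C \<inter> A \<noteq> {}} * card {C \<in> rcosets H2. C \<inter> A \<noteq> {}}"
proof -
  let ?S1 = "{C \<in> rcosets H1. C \<inter> A \<noteq> {}}" and ?S2 = "{C \<in> rcosets H2. C \<inter> A \<noteq> {}}"
  let ?f = "\<lambda>a. (H1 #> a, H2 #> a)"
  have "finite (rcosets H1)" "finite (rcosets H2)"
    using rcosets_subset_PowG[OF H1] rcosets_subset_PowG[OF H2] assms(1)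
    by (auto intro: finite_subset)
  hence fin: "finite (?S1 \<times> ?S2)" by simp
  have "?f ` A \<subseteq> ?S1 \<times> ?S2"
    using A rcos_self[OF _ H1] rcos_self[OF _ H2]
      rcosetsI[OF subgroup.subset[OF H1]] rcosetsI[OF subgroup.subset[OF H2]] by blast
  moreover have "inj_on ?f A"
  proof
    fix a b assume a: "a \<in> A" and b: "b \<in> A" and eq: "?f a = ?f b"
    have aG: "a \<in> carrier G" and bG: "b \<in> carrier G" using a b A by auto
    have "a \<in> H1 #> b" "a \<in> H2 #> b"
      using rcos_self[OF aG H1] rcos_self[OF aG H2] eq by auto
    then obtain h k where h: "h \<in> H1" "a = h \<otimes> b" and k: "k \<in> H2" "a = k \<otimes> b"
      unfolding r_coset_def by blast
    have "h = k"
      using h k bG subgroup.subset[OF H1] subgroup.subset[OF H2] r_cancel by blast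
    hence "h = \<one>" using h k inter by blast
    thus "a = b" using h bG by simp
  qed
  ultimately have "card A \<le> card (?S1 \<times> ?S2)"
    using card_inj_on_le fin by blast
  thus ?thesis by (simp add: card_cartesian_product)
qed

lemma (in comm_group) exists_rcoset_rep_pow_eq_one:
  fixes q s :: nat
  assumes g: "g \<in> carrier G" and h: "h \<in> carrier G" and "0 < ord g"
    and "ord h dvd ord g" and "q dvd ord g" and hq: "h [^] q = g [^] s"
  shows "\<exists>t::nat. (h \<otimes> inv (g [^] t)) [^] q = \<one>"
proof -
  obtain r where r: "ord g = q * r" using \<open>q dvd ord g\<close> by blast
  have "r \<noteq> 0" using r \<open>0 < ord g\<close> by auto
  have "g [^] (s * r) = h [^] (q * r)"
    using g h hq by (simp add: nat_pow_pow[symmetric])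
  also have "\<dots> = \<one>"
    using \<open>ord h dvd ord g\<close> r pow_eq_id[OF h] by simp
  finally have "q * r dvd s * r"
    using pow_eq_id[OF g] r by simp
  then obtain t where t: "s = q * t"
    using \<open>r \<noteq> 0\<close> by auto
  have "(h \<otimes> inv (g [^] t)) [^] q = g [^] s \<otimes> inv (g [^] (t * q))"
    using g h hq by (simp add: nat_pow_distrib nat_pow_inv nat_pow_pow)
  also have "\<dots> = \<one>"
    using g t by (simp add: mult.commute)
  finally show ?thesis by blast
qed

lemma sqrt_le_max_if_le_mult:
  fixes a x y :: real
  assumes "a \<le> x * y" and "0 \<le> x" and "0 \<le> y"
  shows "sqrt a \<le> max x y"
proof -
  have "x * y \<le> max x y * max x y"
    using assms by (intro mult_mono) auto
  hence "sqrt a \<le> sqrt (max x y * max x y)"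
    using assms(1) by (intro real_sqrt_le_mono) linarith
  thus ?thesis
    using assms by simp
qed

locale unique_prime_subgroup = group +
  fixes P :: "'a set"
  assumes finite_carrier: "finite (carrier G)"
    and subgroup_P: "subgroup P G" and prime_card_P: "Factorial_Ring.prime (card P)"
    and unique: "subgroup H G \<Longrightarrow> Factorial_Ring.prime (card H) \<Longrightarrow> H = P"
begin

lemma ord_eq_card_P_power:
  assumes "z \<in> carrier G"
  shows "ord z = card P ^ multiplicity (card P) (ord z)"
proof (rule prime_power_if_unique_prime_divisor)
  show "ord z \<noteq> 0" using ord_ge_1[OF finite_carrier assms] by simp
next
  fix r :: nat assume r: "Factorial_Ring.prime r" "r dvd ord z"
  then obtain y where y: "y \<in> carrier G" "ord y = r"
    using exists_ord_eq_prime_in_generate[OF finite_carrier assms] assms generate_incl by blast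
  hence "generate G {y} = P"
    using unique generate_is_subgroup generate_pow_card r(1) by auto
  thus "r = card P" using generate_pow_card[OF y(1)] y(2) by simp
qed

lemma mem_P_if_pow_card_eq_one:
  assumes x: "x \<in> carrier G" and "x [^] card P = \<one>"
  shows "x \<in> P"
proof (cases "x = \<one>")
  case True thus ?thesis using subgroup.one_closed[OF subgroup_P] by simp
next
  case False
  have "ord x dvd card P" using assms pow_eq_id by blast
  moreover have "ord x \<noteq> 1" using False ord_eq_1[OF x] by simp
  ultimately have "ord x = card P" using prime_card_P by (metis prime_nat_iff)
  hence "generate G {x} = P"
    using unique generate_is_subgroup generate_pow_card x prime_card_P by auto
  thus ?thesis using generate.incl[of x "{x}" G] by blast
qed

lemma ord_dvd_ord_if_le:
  assumes "z \<in> carrier G" "g \<in> carrier G" "ord z \<le> ord g"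
  shows "ord z dvd ord g"
proof -
  have "card P > 1" using prime_card_P prime_gt_1_nat by blast
  thus ?thesis
    using assms ord_eq_card_P_power by (metis le_imp_power_dvd power_le_imp_le_exp)
qed

lemma subset_generate_if_card_P_dvd_ord:
  assumes g: "g \<in> carrier G" and "card P dvd ord g"
  shows "P \<subseteq> generate G {g}"
proof -
  obtain y where y: "y \<in> generate G {g}" "ord y = card P"
    using exists_ord_eq_prime_in_generate[OF finite_carrier g prime_card_P assms(2)] by blast
  have "y \<in> carrier G" using y(1) generate_incl g by blast
  hence "generate G {y} = P"
    using unique generate_is_subgroup generate_pow_card y(2) prime_card_P by auto
  thus ?thesis
    using generate_subgroup_incl[OF _ generate_is_subgroup] y(1) g by blast
qed

lemma mem_generate_if_pow_card_P_mem:
  assumes "comm_group G" and g: "g \<in> carrier G" and "card P dvd ord g"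
    and h: "h \<in> carrier G" and "ord h dvd ord g" and "h [^] card P \<in> generate G {g}"
  shows "h \<in> generate G {g}"
proof -
  interpret comm_group G by (rule assms(1))
  let ?K = "generate G {g}"
  have K: "subgroup ?K G" using generate_is_subgroup g by auto
  obtain s :: nat where "h [^] card P = g [^] s"
    using assms(6) generate_pow_on_finite_carrier[OF finite_carrier g] by blast
  then obtain t :: nat where "(h \<otimes> inv (g [^] t)) [^] card P = \<one>"
    using exists_rcoset_rep_pow_eq_one[OF g h] assms(3,5) ord_ge_1[OF finite_carrier g] by fastforce
  hence "h \<otimes> inv (g [^] t) \<in> ?K"
    using mem_P_if_pow_card_eq_one subset_generate_if_card_P_dvd_ord[OF g assms(3)] g h by auto
  moreover have "g [^] t \<in> ?K"
    using generate_pow_on_finite_carrier[OF finite_carrier g] by blast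
  ultimately have "h \<otimes> inv (g [^] t) \<otimes> g [^] t \<in> ?K"
    using subgroup.m_closed[OF K] by blast
  thus ?thesis using g h by (simp add: m_assoc)
qed

lemma generate_eq_carrier_if_max_ord:
  assumes "comm_group G" and g: "g \<in> carrier G"
    and max: "\<And>z. z \<in> carrier G \<Longrightarrow> ord z \<le> ord g"
  shows "generate G {g} = carrier G"
proof -
  let ?q = "card P" and ?K = "generate G {g}"
  obtain y where y: "y \<in> P" "y \<noteq> \<one>"
    using prime_gt_1_nat[OF prime_card_P] card_mono[of "{\<one>}" P] by fastforce
  have yG: "y \<in> carrier G" using subgroup.mem_carrier[OF subgroup_P y(1)] .
  have "ord y = ?q"
    using generate_eq_subgroup_of_prime_card[OF finite_carrier subgroup_P prime_card_P y]
      generate_pow_card[OF yG] by simp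
  hence q_dvd_g: "?q dvd ord g"
    using ord_dvd_ord_if_le[OF yG g max[OF yG]] by simp
  have "h \<in> ?K" if "h \<in> carrier G" for h
    using that
  proof (induction "ord h" arbitrary: h rule: less_induct)
    case less
    show ?case
    proof (cases "h = \<one>")
      case True thus ?thesis using generate.one by simp
    next
      case False
      have "?q dvd ord h"
        using ord_eq_card_P_power[OF less.prems] False ord_eq_1[OF less.prems]
        by (metis dvd_power gr0I power_0)
      hence "ord (h [^] ?q) < ord h"
        using ord_pow[OF less.prems] prime_gt_1_nat[OF prime_card_P]
          ord_ge_1[OF finite_carrier less.prems] by simp
      hence "h [^] ?q \<in> ?K" using less.hyps less.prems by simp
      thus ?thesis
        using mem_generate_if_pow_card_P_mem[OF assms(1) g q_dvd_g less.prems]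
          ord_dvd_ord_if_le[OF less.prems g max[OF less.prems]] by blast
    qed
  qed
  thus ?thesis using generate_incl[of "{g}"] g by blast
qed

end

lemma (in comm_group) exists_two_prime_card_subgroups:
  assumes fin: "finite (carrier G)" and "order G > 1"
    and not_cyclic_prime_power:
      "\<not> (cyclic_group G \<and> (\<exists>p k. Factorial_Ring.prime (p::nat) \<and> order G = p ^ k))"
  shows "\<exists>H1 H2. subgroup H1 G \<and> Factorial_Ring.prime (card H1) \<and>
           subgroup H2 G \<and> Factorial_Ring.prime (card H2) \<and> H1 \<noteq> H2"
proof (rule ccontr)
  assume no_two: "\<not> ?thesis"
  have "\<not> carrier G \<subseteq> {\<one>}"
    using \<open>order G > 1\<close> card_mono[of "{\<one>}" "carrier G"] unfolding order_def by force
  then obtain x where x: "x \<in> carrier G" "x \<noteq> \<one>" by blast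
  hence "ord x \<noteq> 1" using ord_eq_1 by simp
  then obtain q where q: "Factorial_Ring.prime q" "q dvd ord x"
    using prime_factor_nat by blast
  then obtain y where y: "y \<in> carrier G" "ord y = q"
    using exists_ord_eq_prime_in_generate[OF fin x(1)] generate_incl x(1) by blast
  have "Max (ord ` carrier G) \<in> ord ` carrier G"
    using Max_in[OF finite_imageI[OF fin]] one_closed by blast
  then obtain g where g: "Max (ord ` carrier G) = ord g" "g \<in> carrier G" by (rule imageE)
  have max: "\<And>z. z \<in> carrier G \<Longrightarrow> ord z \<le> ord g"
    unfolding g(1)[symmetric] using fin by simp
  let ?P = "generate G {y}"
  have P: "subgroup ?P G" using generate_is_subgroup y(1) by simp
  have card_P: "card ?P = q" using generate_pow_card[OF y(1)] y(2) by simp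
  interpret unique_prime_subgroup G ?P
  proof (rule unique_prime_subgroup.intro[OF is_group unique_prime_subgroup_axioms.intro])
    show "Factorial_Ring.prime (card ?P)" using q(1) card_P by simp
    fix H assume "subgroup H G" "Factorial_Ring.prime (card H)"
    thus "H = ?P" using no_two P q(1) card_P by blast
  qed (fact fin P)+
  have gen: "generate G {g} = carrier G"
    by (rule generate_eq_carrier_if_max_ord[OF comm_group_axioms g(2) max])
  hence "cyclic_group G"
    unfolding cyclic_group_def using g(2) by (rule bexI)
  moreover have "order G = ord g"
    using generate_pow_card[OF g(2)] gen unfolding order_def by simp
  hence "order G = card ?P ^ multiplicity (card ?P) (ord g)"
    using ord_eq_card_P_power[OF g(2)] by (rule trans)
  ultimately have "cyclic_group G \<and> (\<exists>p k. Factorial_Ring.prime (p::nat) \<and> order G = p ^ k)"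
    using prime_card_P by blast
  with not_cyclic_prime_power show False by contradiction
qed

theorem mainTheorem7:
  fixes G :: "('a, 'b) monoid_scheme" and A :: "'a set"
  assumes "comm_group G"
    and "finite (carrier G)"
    and "order G > 1"
    and "\<not> (cyclic_group G \<and> (\<exists>p k. Factorial_Ring.prime (p::nat) \<and> order G = p ^ k))"
    and "A \<subseteq> carrier G" and "A \<noteq> {}"
  shows "\<exists>H. subgroup H G \<and> Factorial_Ring.prime (card H) \<and>
           real (card {C \<in> rcosets\<^bsub>G\<^esub> H. C \<inter> A \<noteq> {}}) \<ge> sqrt (real (card A))"
proof -
  interpret comm_group G by (rule assms(1))
  obtain H1 H2 where H1: "subgroup H1 G" "Factorial_Ring.prime (card H1)"
    and H2: "subgroup H2 G" "Factorial_Ring.prime (card H2)" and "H1 \<noteq> H2"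
    using exists_two_prime_card_subgroups[OF assms(2-4)] by blast
  let ?n = "\<lambda>H. card {C \<in> rcosets\<^bsub>G\<^esub> H. C \<inter> A \<noteq> {}}"
  have "card A \<le> ?n H1 * ?n H2"
    using card_le_mult_card_rcosets_meeting[OF assms(2) H1(1) H2(1) _ assms(5)]
      prime_card_subgroups_inter_trivial[OF assms(2) H1 H2 \<open>H1 \<noteq> H2\<close>] by blast
  hence "sqrt (real (card A)) \<le> max (real (?n H1)) (real (?n H2))"
    by (intro sqrt_le_max_if_le_mult) (simp_all flip: of_nat_mult)
  thus ?thesis
    using H1 H2 by (cases "?n H1 \<le> ?n H2") (auto simp: max_def)
qed

end
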